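(* Let $\pi_k$ (target policy), $\beta_k$ and $\beta_{k+1}$ (behavioral policies) be stationary policies, let $\pi_{k+1}=\beta_{k+1}$, and let $\mu_k=d^{\beta_k}$. Let $q$ be an estimate of $Q^{\pi_k}$. Assume (i) $\max_{s}d_{TV}\big(\beta_k(\cdot|s),\beta_{k+1}(\cdot|s)\big)\le\delta(1-\gamma)$; (ii) $\varepsilon(\mu_k,q)\le\varepsilon$; and (iii) $|Q^{\pi_k}(s,a)-q(s,a)|\le\frac{1}{1-\gamma}$ for all $(s,a)$. Then $$V^{\pi_{k+1}}(s_0)-V^{\pi_k}(s_0)\;\ge\;\frac{1}{1-\gamma}\left(\mathbb{A}^{\pi_k}_{\pi_{k+1}}-\varepsilon-\frac{2\delta}{1-\gamma}\right).$$
   Context: Finite discounted MDP $(\mathcal{S},\mathcal{A},P,r,\gamma,s_0)$ with rewards in $[0,1]$, $\gamma\in[0,1)$, fixed initial state $s_0$. For a stationary policy $\pi$: $V^\pi,Q^\pi$ are its value and action-value functions and $d^{\pi}(s,a)=(1-\gamma)\sum_{t\ge0}\gamma^t\Pr_\pi(s_t=s,a_t=a)$ its discounted state-action visitation distribution from $s_0$. Weighted action-value error of an estimate $q$ of $Q^{\pi_k}$ on a distribution $\mu$: $\varepsilon(\mu,q)=\sum_{s,a}\mu(s,a)|Q^{\pi_k}(s,a)-q(s,a)|$. Estimated expected advantage: $\mathbb{A}^{\pi_k}_{\pi_{k+1}}=\mathbb{E}_{(s,a)\sim d^{\pi_{k+1}}}[q(s,a)-V^{\pi_k}(s)]$. Total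 variation: $d_{TV}(p,q)=\frac12\sum_x|p(x)-q(x)|$. *)

theory Defs
  imports "HOL-Analysis.Analysis"
begin

definition is_mdp :: "('s::finite \<Rightarrow> 'a::finite \<Rightarrow> 's \<Rightarrow> real) \<Rightarrow> ('s \<Rightarrow> 'a \<Rightarrow> real) \<Rightarrow> real \<Rightarrow> bool" where
  "is_mdp P r \<gamma> \<longleftrightarrow>
     (\<forall>s a s'. 0 \<le> P s a s') \<and> (\<forall>s a. (\<Sum>s'\<in>UNIV. P s a s') = 1) \<and>
     (\<forall>s a. 0 \<le> r s a \<and> r s a \<le> 1) \<and> 0 \<le> \<gamma> \<and> \<gamma> < 1"

definition stoch_policy :: "('s::finite \<Rightarrow> 'a::finite \<Rightarrow> real) \<Rightarrow> bool" where
  "stoch_policy \<pi> \<longleftrightarrow> (\<forall>s a. 0 \<le> \<pi> s a) \<and> (\<forall>s. (\<Sum>a\<in>UNIV. \<pi> s a) = 1)"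

text \<open>sa_dist P pi x t s a = Pr_pi(s_t = s, a_t = a) when starting from s_0 = x.\<close>
fun sa_dist :: "('s::finite \<Rightarrow> 'a::finite \<Rightarrow> 's \<Rightarrow> real) \<Rightarrow> ('s \<Rightarrow> 'a \<Rightarrow> real) \<Rightarrow> 's \<Rightarrow> nat \<Rightarrow> 's \<Rightarrow> 'a \<Rightarrow> real" where
  "sa_dist P \<pi> x 0 = (\<lambda>s a. (if s = x then 1 else 0) * \<pi> s a)"
| "sa_dist P \<pi> x (Suc t) =
     (\<lambda>s' a'. (\<Sum>s\<in>UNIV. \<Sum>a\<in>UNIV. sa_dist P \<pi> x t s a * P s a s') * \<pi> s' a')"

definition Vf :: "('s::finite \<Rightarrow> 'a::finite \<Rightarrow> 's \<Rightarrow> real) \<Rightarrow> ('s \<Rightarrow> 'a \<Rightarrow> real) \<Rightarrow> real \<Rightarrow> ('s \<Rightarrow> 'a \<Rightarrow> real) \<Rightarrow> 's \<Rightarrow> real" where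
  "Vf P r \<gamma> \<pi> x = (\<Sum>t. \<gamma> ^ t * (\<Sum>s\<in>UNIV. \<Sum>a\<in>UNIV. sa_dist P \<pi> x t s a * r s a))"

definition Qf :: "('s::finite \<Rightarrow> 'a::finite \<Rightarrow> 's \<Rightarrow> real) \<Rightarrow> ('s \<Rightarrow> 'a \<Rightarrow> real) \<Rightarrow> real \<Rightarrow> ('s \<Rightarrow> 'a \<Rightarrow> real) \<Rightarrow> 's \<Rightarrow> 'a \<Rightarrow> real" where
  "Qf P r \<gamma> \<pi> s a = r s a + \<gamma> * (\<Sum>s'\<in>UNIV. P s a s' * Vf P r \<gamma> \<pi> s')"

definition visit :: "('s::finite \<Rightarrow> 'a::finite \<Rightarrow> 's \<Rightarrow> real) \<Rightarrow> real \<Rightarrow> ('s \<Rightarrow> 'a \<Rightarrow> real) \<Rightarrow> 's \<Rightarrow> 's \<Rightarrow> 'a \<Rightarrow> real" where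
  "visit P \<gamma> \<pi> s0 s a = (1 - \<gamma>) * (\<Sum>t. \<gamma> ^ t * sa_dist P \<pi> s0 t s a)"

definition tv_dist :: "('x::finite \<Rightarrow> real) \<Rightarrow> ('x \<Rightarrow> real) \<Rightarrow> real" where
  "tv_dist p q = (1/2) * (\<Sum>x\<in>UNIV. \<bar>p x - q x\<bar>)"

definition werr :: "('s::finite \<Rightarrow> 'a::finite \<Rightarrow> real) \<Rightarrow> ('s \<Rightarrow> 'a \<Rightarrow> real) \<Rightarrow> ('s \<Rightarrow> 'a \<Rightarrow> real) \<Rightarrow> real" where
  "werr \<mu> Qt q = (\<Sum>s\<in>UNIV. \<Sum>a\<in>UNIV. \<mu> s a * \<bar>Qt s a - q s a\<bar>)"

definition est_adv :: "('s::finite \<Rightarrow> 'a::finite \<Rightarrow> real) \<Rightarrow> ('s \<Rightarrow> 'a \<Rightarrow> real) \<Rightarrow> ('s \<Rightarrow> real) \<Rightarrow> real" where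
  "est_adv d q V = (\<Sum>s\<in>UNIV. \<Sum>a\<in>UNIV. d s a * (q s a - V s))"

end

theory Submission
  imports Defs
begin

(* By the performance difference lemma, (1 - gamma) (V^{pi_{k+1}}(s0) - V^{pi_k}(s0)) is the
   true advantage of pi_{k+1} over pi_k under d^{pi_{k+1}}, which differs from the estimated
   advantage by at most the error of q weighted by d^{pi_{k+1}} = d^{beta_{k+1}}. The hypothesis
   controls that error only under d^{beta_k}. But the time-t state-action distributions of
   beta_k and beta_{k+1} drift apart in L1 by at most 2 (t + 1) delta (1 - gamma): transitions do
   not increase L1 distances, and each action choice adds at most twice the total variation.
   After discounting, the two visitation distributions are within 2 delta in L1, and as the
   error of q is at most 1/(1 - gamma), changing the weights costs at most 2 delta/(1 - gamma). *)

definition sa_sum :: "('s::finite \<Rightarrow> 'a::finite \<Rightarrow> real) \<Rightarrow> ('s \<Rightarrow> 'a \<Rightarrow> real) \<Rightarrow> real" where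
  "sa_sum \<mu> h = (\<Sum>s\<in>UNIV. \<Sum>a\<in>UNIV. \<mu> s a * h s a)"

definition next_state_dist :: "('s::finite \<Rightarrow> 'a::finite \<Rightarrow> 's \<Rightarrow> real) \<Rightarrow> ('s \<Rightarrow> 'a \<Rightarrow> real) \<Rightarrow> 's \<Rightarrow> real" where
  "next_state_dist P \<mu> s' = (\<Sum>s\<in>UNIV. \<Sum>a\<in>UNIV. \<mu> s a * P s a s')"

lemma sa_sum_add: "sa_sum \<mu> (\<lambda>s a. f s a + g s a) = sa_sum \<mu> f + sa_sum \<mu> g"
  by (simp add: sa_sum_def distrib_left sum.distrib)

lemma sa_sum_diff: "sa_sum \<mu> (\<lambda>s a. f s a - g s a) = sa_sum \<mu> f - sa_sum \<mu> g"
  by (simp add: sa_sum_def right_diff_distrib sum_subtractf)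

lemma sa_sum_cmult: "sa_sum \<mu> (\<lambda>s a. c * f s a) = c * sa_sum \<mu> f"
  by (simp add: sa_sum_def sum_distrib_left mult_ac)

lemma sa_sum_mono:
  assumes "\<And>s a. 0 \<le> \<mu> s a" "\<And>s a. f s a \<le> g s a"
  shows "sa_sum \<mu> f \<le> sa_sum \<mu> g"
  unfolding sa_sum_def using assms by (intro sum_mono mult_left_mono) auto

lemma sa_sum_diff_le_l1:
  assumes "\<And>s a. \<bar>g s a\<bar> \<le> G"
  shows "sa_sum \<mu>' g - sa_sum \<mu> g \<le> G * (\<Sum>s\<in>UNIV. \<Sum>a\<in>UNIV. \<bar>\<mu>' s a - \<mu> s a\<bar>)"
proof -
  have term_le: "(\<mu>' s a - \<mu> s a) * g s a \<le> G * \<bar>\<mu>' s a - \<mu> s a\<bar>" for s a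
  proof -
    have "(\<mu>' s a - \<mu> s a) * g s a \<le> \<bar>\<mu>' s a - \<mu> s a\<bar> * \<bar>g s a\<bar>"
      by (metis abs_ge_self abs_mult)
    also have "\<dots> \<le> \<bar>\<mu>' s a - \<mu> s a\<bar> * G"
      using assms by (simp add: mult_left_mono)
    finally show ?thesis by (simp add: mult.commute)
  qed
  have "sa_sum \<mu>' g - sa_sum \<mu> g = (\<Sum>s\<in>UNIV. \<Sum>a\<in>UNIV. (\<mu>' s a - \<mu> s a) * g s a)"
    unfolding sa_sum_def by (simp only: left_diff_distrib sum_subtractf)
  also have "\<dots> \<le> (\<Sum>s\<in>UNIV. \<Sum>a\<in>UNIV. G * \<bar>\<mu>' s a - \<mu> s a\<bar>)"
    by (intro sum_mono term_le)
  finally show ?thesis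
    by (simp add: sum_distrib_left)
qed

lemma sa_sum_next_state_dist:
  "sa_sum \<mu> (\<lambda>s a. \<Sum>s'\<in>UNIV. P s a s' * f s') = (\<Sum>s'\<in>UNIV. next_state_dist P \<mu> s' * f s')"
proof -
  have "sa_sum \<mu> (\<lambda>s a. \<Sum>s'\<in>UNIV. P s a s' * f s')
      = (\<Sum>s\<in>UNIV. \<Sum>a\<in>UNIV. \<Sum>s'\<in>UNIV. \<mu> s a * P s a s' * f s')"
    by (simp add: sa_sum_def sum_distrib_left mult.assoc)
  also have "\<dots> = (\<Sum>s\<in>UNIV. \<Sum>s'\<in>UNIV. \<Sum>a\<in>UNIV. \<mu> s a * P s a s' * f s')"
    by (rule sum.cong[OF refl], rule sum.swap)
  also have "\<dots> = (\<Sum>s'\<in>UNIV. \<Sum>s\<in>UNIV. \<Sum>a\<in>UNIV. \<mu> s a * P s a s' * f s')"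
    by (rule sum.swap)
  also have "\<dots> = (\<Sum>s'\<in>UNIV. next_state_dist P \<mu> s' * f s')"
    by (simp add: next_state_dist_def sum_distrib_right)
  finally show ?thesis .
qed

lemma next_state_dist_mass:
  assumes "is_mdp P r \<gamma>"
  shows "(\<Sum>s'\<in>UNIV. next_state_dist P \<mu> s') = (\<Sum>s\<in>UNIV. \<Sum>a\<in>UNIV. \<mu> s a)"
  using sa_sum_next_state_dist[of \<mu> P "\<lambda>_. 1"] assms by (simp add: is_mdp_def sa_sum_def)

lemma next_state_dist_nonneg:
  assumes "is_mdp P r \<gamma>" "\<And>s a. 0 \<le> \<mu> s a"
  shows "0 \<le> next_state_dist P \<mu> s'"
  using assms unfolding next_state_dist_def is_mdp_def by (simp add: sum_nonneg)

lemma next_state_dist_l1_le: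
  assumes "is_mdp P r \<gamma>"
  shows "(\<Sum>s'\<in>UNIV. \<bar>next_state_dist P \<mu>' s' - next_state_dist P \<mu> s'\<bar>)
    \<le> (\<Sum>s\<in>UNIV. \<Sum>a\<in>UNIV. \<bar>\<mu>' s a - \<mu> s a\<bar>)"
proof -
  have P_nonneg: "0 \<le> P s a s'" for s a s'
    using assms by (simp add: is_mdp_def)
  have "\<bar>next_state_dist P \<mu>' s' - next_state_dist P \<mu> s'\<bar> \<le> next_state_dist P (\<lambda>s a. \<bar>\<mu>' s a - \<mu> s a\<bar>) s'" for s'
  proof -
    have "\<bar>next_state_dist P \<mu>' s' - next_state_dist P \<mu> s'\<bar>
        = \<bar>\<Sum>s\<in>UNIV. \<Sum>a\<in>UNIV. (\<mu>' s a - \<mu> s a) * P s a s'\<bar>"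
      unfolding next_state_dist_def by (simp only: left_diff_distrib sum_subtractf)
    also have "\<dots> \<le> (\<Sum>s\<in>UNIV. \<Sum>a\<in>UNIV. \<bar>(\<mu>' s a - \<mu> s a) * P s a s'\<bar>)"
      by (rule order_trans[OF sum_abs sum_mono[OF sum_abs]])
    also have "\<dots> = next_state_dist P (\<lambda>s a. \<bar>\<mu>' s a - \<mu> s a\<bar>) s'"
      unfolding next_state_dist_def abs_mult using P_nonneg by simp
    finally show ?thesis .
  qed
  then have "(\<Sum>s'\<in>UNIV. \<bar>next_state_dist P \<mu>' s' - next_state_dist P \<mu> s'\<bar>)
      \<le> (\<Sum>s'\<in>UNIV. next_state_dist P (\<lambda>s a. \<bar>\<mu>' s a - \<mu> s a\<bar>) s')"
    by (rule sum_mono)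
  also have "\<dots> = (\<Sum>s\<in>UNIV. \<Sum>a\<in>UNIV. \<bar>\<mu>' s a - \<mu> s a\<bar>)"
    by (rule next_state_dist_mass[OF assms])
  finally show ?thesis .
qed

lemma state_policy_l1_le:
  assumes "stoch_policy \<beta>'" "\<And>s. 0 \<le> \<nu> s" "\<forall>s. tv_dist (\<beta> s) (\<beta>' s) \<le> \<alpha>"
  shows "(\<Sum>s\<in>UNIV. \<Sum>a\<in>UNIV. \<bar>\<nu>' s * \<beta>' s a - \<nu> s * \<beta> s a\<bar>)
    \<le> (\<Sum>s\<in>UNIV. \<bar>\<nu>' s - \<nu> s\<bar>) + 2 * \<alpha> * (\<Sum>s\<in>UNIV. \<nu> s)"
proof -
  have "(\<Sum>a\<in>UNIV. \<bar>\<nu>' s * \<beta>' s a - \<nu> s * \<beta> s a\<bar>) \<le> \<bar>\<nu>' s - \<nu> s\<bar> + 2 * \<alpha> * \<nu> s" for s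
  proof -
    have "(\<Sum>a\<in>UNIV. \<bar>\<nu>' s * \<beta>' s a - \<nu> s * \<beta> s a\<bar>)
        \<le> (\<Sum>a\<in>UNIV. \<bar>\<nu>' s - \<nu> s\<bar> * \<beta>' s a + \<nu> s * \<bar>\<beta> s a - \<beta>' s a\<bar>)"
    proof (rule sum_mono)
      fix a
      have "\<nu>' s * \<beta>' s a - \<nu> s * \<beta> s a = (\<nu>' s - \<nu> s) * \<beta>' s a + \<nu> s * (\<beta>' s a - \<beta> s a)"
        by (simp add: algebra_simps)
      then show "\<bar>\<nu>' s * \<beta>' s a - \<nu> s * \<beta> s a\<bar> \<le> \<bar>\<nu>' s - \<nu> s\<bar> * \<beta>' s a + \<nu> s * \<bar>\<beta> s a - \<beta>' s a\<bar>"
        using assms(1) assms(2)[of s] abs_triangle_ineq[of "(\<nu>' s - \<nu> s) * \<beta>' s a" "\<nu> s * (\<beta>' s a - \<beta> s a)"]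
        by (simp add: stoch_policy_def abs_mult abs_minus_commute)
    qed
    also have "\<dots> = \<bar>\<nu>' s - \<nu> s\<bar> + \<nu> s * (2 * tv_dist (\<beta> s) (\<beta>' s))"
      using assms(1) by (simp add: stoch_policy_def tv_dist_def sum.distrib sum_distrib_left[symmetric])
    also have "\<dots> \<le> \<bar>\<nu>' s - \<nu> s\<bar> + 2 * \<alpha> * \<nu> s"
      using mult_left_mono[OF spec[OF assms(3)] assms(2)] by (simp add: mult_ac)
    finally show ?thesis .
  qed
  then have "(\<Sum>s\<in>UNIV. \<Sum>a\<in>UNIV. \<bar>\<nu>' s * \<beta>' s a - \<nu> s * \<beta> s a\<bar>)
      \<le> (\<Sum>s\<in>UNIV. \<bar>\<nu>' s - \<nu> s\<bar> + 2 * \<alpha> * \<nu> s)"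
    by (rule sum_mono)
  then show ?thesis
    by (simp add: sum.distrib sum_distrib_left)
qed

lemma sa_dist_Suc:
  "sa_dist P \<pi> x (Suc t) s' a' = next_state_dist P (sa_dist P \<pi> x t) s' * \<pi> s' a'"
  by (simp add: next_state_dist_def)

lemma sa_sum_sa_dist_0:
  assumes "stoch_policy \<pi>"
  shows "sa_sum (sa_dist P \<pi> x 0) (\<lambda>s a. f s) = f x"
proof -
  have "(\<Sum>a\<in>UNIV. (if s = x then 1 else 0) * \<pi> s a * f s) = (if s = x then f x else 0)" for s
    using assms by (simp add: stoch_policy_def sum_distrib_right[symmetric])
  then show ?thesis
    by (simp add: sa_sum_def)
qed

lemma sa_sum_sa_dist_Suc:
  assumes "stoch_policy \<pi>"
  shows "sa_sum (sa_dist P \<pi> x (Suc t)) (\<lambda>s a. f s)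
    = sa_sum (sa_dist P \<pi> x t) (\<lambda>s a. \<Sum>s'\<in>UNIV. P s a s' * f s')"
proof -
  have "(\<Sum>a'\<in>UNIV. next_state_dist P (sa_dist P \<pi> x t) s' * \<pi> s' a' * f s')
      = next_state_dist P (sa_dist P \<pi> x t) s' * f s' * (\<Sum>a'\<in>UNIV. \<pi> s' a')" for s'
    by (simp add: sum_distrib_left sum_distrib_right mult_ac)
  then have "sa_sum (sa_dist P \<pi> x (Suc t)) (\<lambda>s a. f s)
      = (\<Sum>s'\<in>UNIV. next_state_dist P (sa_dist P \<pi> x t) s' * f s')"
    using assms by (simp add: sa_sum_def sa_dist_Suc stoch_policy_def del: sa_dist.simps)
  then show ?thesis
    by (simp only: sa_sum_next_state_dist)
qed

lemma sa_dist_nonneg: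
  assumes "is_mdp P r \<gamma>" "stoch_policy \<pi>"
  shows "0 \<le> sa_dist P \<pi> x t s a"
proof (induction t arbitrary: s a)
  case 0
  then show ?case using assms(2) by (simp add: stoch_policy_def)
next
  case (Suc t)
  have "0 \<le> next_state_dist P (sa_dist P \<pi> x t) s"
    using next_state_dist_nonneg[OF assms(1)] Suc.IH by blast
  then show ?case
    using assms(2) by (simp add: sa_dist_Suc stoch_policy_def del: sa_dist.simps)
qed

lemma sa_dist_mass:
  assumes "is_mdp P r \<gamma>" "stoch_policy \<pi>"
  shows "(\<Sum>s\<in>UNIV. \<Sum>a\<in>UNIV. sa_dist P \<pi> x t s a) = 1"
proof (induction t)
  case 0
  then show ?case using sa_sum_sa_dist_0[OF assms(2), of P x "\<lambda>_. 1"] by (simp add: sa_sum_def)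
next
  case (Suc t)
  then show ?case
    using sa_sum_sa_dist_Suc[OF assms(2), of P x t "\<lambda>_. 1"] assms(1) by (simp add: sa_sum_def is_mdp_def)
qed

lemma sa_dist_le_1:
  assumes "is_mdp P r \<gamma>" "stoch_policy \<pi>"
  shows "sa_dist P \<pi> x t s a \<le> 1"
proof -
  have "sa_dist P \<pi> x t s a \<le> (\<Sum>a\<in>UNIV. sa_dist P \<pi> x t s a)"
    by (rule member_le_sum) (auto intro: sa_dist_nonneg[OF assms])
  also have "\<dots> \<le> (\<Sum>s\<in>UNIV. \<Sum>a\<in>UNIV. sa_dist P \<pi> x t s a)"
    by (rule member_le_sum[where f = "\<lambda>s. \<Sum>a\<in>UNIV. sa_dist P \<pi> x t s a"])
      (auto intro!: sum_nonneg sa_dist_nonneg[OF assms])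
  finally show ?thesis
    using sa_dist_mass[OF assms] by simp
qed

lemma sa_sum_sa_dist_abs_le:
  assumes "is_mdp P r \<gamma>" "stoch_policy \<pi>" "\<And>s a. \<bar>h s a\<bar> \<le> B"
  shows "\<bar>sa_sum (sa_dist P \<pi> x t) h\<bar> \<le> B"
proof -
  have "\<bar>sa_sum (sa_dist P \<pi> x t) h\<bar> \<le> (\<Sum>s\<in>UNIV. \<Sum>a\<in>UNIV. \<bar>sa_dist P \<pi> x t s a * h s a\<bar>)"
    unfolding sa_sum_def by (rule order_trans[OF sum_abs sum_mono[OF sum_abs]])
  also have "\<dots> \<le> (\<Sum>s\<in>UNIV. \<Sum>a\<in>UNIV. sa_dist P \<pi> x t s a * B)"
    using sa_dist_nonneg[OF assms(1,2)] assms(3)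
    by (intro sum_mono) (simp add: abs_mult mult_left_mono)
  also have "\<dots> = B"
    using sa_dist_mass[OF assms(1,2)] by (simp add: sum_distrib_right[symmetric])
  finally show ?thesis .
qed

lemma summable_discounted_sa_dist:
  assumes "is_mdp P r \<gamma>" "stoch_policy \<pi>"
  shows "summable (\<lambda>t. \<gamma> ^ t * sa_dist P \<pi> x t s a)"
proof (rule summable_comparison_test)
  have "0 \<le> \<gamma>" "\<gamma> < 1"
    using assms(1) by (auto simp: is_mdp_def)
  then show "summable (\<lambda>t. \<gamma> ^ t)"
    by (intro summable_geometric) auto
  show "\<exists>N. \<forall>t\<ge>N. norm (\<gamma> ^ t * sa_dist P \<pi> x t s a) \<le> \<gamma> ^ t"
    using sa_dist_nonneg[OF assms] sa_dist_le_1[OF assms] \<open>0 \<le> \<gamma>\<close>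
    by (auto simp: abs_mult intro!: mult_left_le)
qed

lemma summable_discounted_sa_sum:
  assumes "is_mdp P r \<gamma>" "stoch_policy \<pi>"
  shows "summable (\<lambda>t. \<gamma> ^ t * sa_sum (sa_dist P \<pi> x t) h)"
proof -
  have "summable (\<lambda>t. \<Sum>s\<in>UNIV. \<Sum>a\<in>UNIV. \<gamma> ^ t * sa_dist P \<pi> x t s a * h s a)"
    by (intro summable_sum summable_mult2 summable_discounted_sa_dist[OF assms])
  then show ?thesis
    by (simp add: sa_sum_def sum_distrib_left mult.assoc)
qed

lemma visit_nonneg:
  assumes "is_mdp P r \<gamma>" "stoch_policy \<pi>"
  shows "0 \<le> visit P \<gamma> \<pi> x s a"
  using assms(1) sa_dist_nonneg[OF assms] summable_discounted_sa_dist[OF assms]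
  unfolding visit_def is_mdp_def by (simp add: suminf_nonneg)

lemma visit_sa_sum:
  assumes "is_mdp P r \<gamma>" "stoch_policy \<pi>"
  shows "sa_sum (visit P \<gamma> \<pi> x) h = (1 - \<gamma>) * (\<Sum>t. \<gamma> ^ t * sa_sum (sa_dist P \<pi> x t) h)"
proof -
  have "sa_sum (visit P \<gamma> \<pi> x) h
      = (1 - \<gamma>) * (\<Sum>s\<in>UNIV. \<Sum>a\<in>UNIV. \<Sum>t. \<gamma> ^ t * sa_dist P \<pi> x t s a * h s a)"
    using summable_discounted_sa_dist[OF assms]
    by (simp add: sa_sum_def visit_def sum_distrib_left suminf_mult2 mult.assoc)
  also have "\<dots> = (1 - \<gamma>) * (\<Sum>t. \<Sum>s\<in>UNIV. \<Sum>a\<in>UNIV. \<gamma> ^ t * sa_dist P \<pi> x t s a * h s a)"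
    using summable_discounted_sa_dist[OF assms]
    by (simp add: suminf_sum summable_sum summable_mult2)
  also have "\<dots> = (1 - \<gamma>) * (\<Sum>t. \<gamma> ^ t * sa_sum (sa_dist P \<pi> x t) h)"
    by (simp add: sa_sum_def sum_distrib_left mult.assoc)
  finally show ?thesis .
qed

lemma Vf_abs_le:
  assumes "is_mdp P r \<gamma>" "stoch_policy \<pi>"
  shows "\<bar>Vf P r \<gamma> \<pi> x\<bar> \<le> 1 / (1 - \<gamma>)"
proof -
  have \<gamma>: "0 \<le> \<gamma>" "\<gamma> < 1" and r: "\<And>s a. \<bar>r s a\<bar> \<le> 1"
    using assms(1) by (auto simp: is_mdp_def)
  have geom: "(\<lambda>t. \<gamma> ^ t) sums (1 / (1 - \<gamma>))"
    using \<gamma> geometric_sums[of \<gamma>] by simp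
  have term_le: "\<bar>\<gamma> ^ t * sa_sum (sa_dist P \<pi> x t) r\<bar> \<le> \<gamma> ^ t" for t
    using sa_sum_sa_dist_abs_le[OF assms r] \<gamma> by (simp add: abs_mult mult_left_le)
  have "summable (\<lambda>t. \<bar>\<gamma> ^ t * sa_sum (sa_dist P \<pi> x t) r\<bar>)"
    by (rule summable_rabs_comparison_test[where g = "\<lambda>t. \<gamma> ^ t"])
      (use term_le sums_summable[OF geom] in auto)
  then have "\<bar>\<Sum>t. \<gamma> ^ t * sa_sum (sa_dist P \<pi> x t) r\<bar> \<le> (\<Sum>t. \<gamma> ^ t)"
    using term_le sums_summable[OF geom] by (intro order_trans[OF summable_rabs] suminf_le) auto
  then show ?thesis
    using sums_unique[OF geom] by (simp add: Vf_def sa_sum_def)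
qed

lemma performance_difference_sums:
  assumes mdp: "is_mdp P r \<gamma>" and pol: "stoch_policy \<pi>" and V_bound: "\<And>s. \<bar>V s\<bar> \<le> B"
  shows "(\<lambda>t. \<gamma> ^ t * sa_sum (sa_dist P \<pi> x t)
      (\<lambda>s a. r s a + \<gamma> * (\<Sum>s'\<in>UNIV. P s a s' * V s') - V s)) sums (Vf P r \<gamma> \<pi> x - V x)"
proof -
  have \<gamma>: "0 \<le> \<gamma>" "\<gamma> < 1"
    using mdp by (auto simp: is_mdp_def)
  define W where "W t = sa_sum (sa_dist P \<pi> x t) (\<lambda>s a. V s)" for t
  have residual_eq: "sa_sum (sa_dist P \<pi> x t) (\<lambda>s a. r s a + \<gamma> * (\<Sum>s'\<in>UNIV. P s a s' * V s') - V s)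
      = sa_sum (sa_dist P \<pi> x t) r + \<gamma> * W (Suc t) - W t" for t
    unfolding W_def sa_sum_sa_dist_Suc[OF pol] by (simp only: sa_sum_diff sa_sum_add sa_sum_cmult)
  have term_eq: "\<gamma> ^ t * sa_sum (sa_dist P \<pi> x t)
      (\<lambda>s a. r s a + \<gamma> * (\<Sum>s'\<in>UNIV. P s a s' * V s') - V s)
    = \<gamma> ^ t * sa_sum (sa_dist P \<pi> x t) r + (\<gamma> ^ Suc t * W (Suc t) - \<gamma> ^ t * W t)" for t
  proof -
    have "\<gamma> ^ t * (a + \<gamma> * b - c) = \<gamma> ^ t * a + (\<gamma> ^ Suc t * b - \<gamma> ^ t * c)" for a b c :: real
      by (simp add: algebra_simps)
    then show ?thesis
      unfolding residual_eq .
  qed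
  have rewards: "(\<lambda>t. \<gamma> ^ t * sa_sum (sa_dist P \<pi> x t) r) sums Vf P r \<gamma> \<pi> x"
    using summable_sums[OF summable_discounted_sa_sum[OF mdp pol]] by (simp add: Vf_def sa_sum_def)
  have "\<bar>W t\<bar> \<le> B" for t
    unfolding W_def using V_bound by (rule sa_sum_sa_dist_abs_le[OF mdp pol])
  then have discounted_W_le: "\<bar>\<gamma> ^ t * W t\<bar> \<le> \<gamma> ^ t * B" for t
    using \<gamma> by (simp add: abs_mult mult_left_mono)
  have "(\<lambda>t. \<gamma> ^ t * B) \<longlonglongrightarrow> 0"
    using \<gamma> by (intro tendsto_mult_left_zero LIMSEQ_power_zero) auto
  then have "(\<lambda>t. \<gamma> ^ t * W t) \<longlonglongrightarrow> 0"
    by (rule Lim_null_comparison[OF always_eventually, rotated]) (simp add: discounted_W_le)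
  from telescope_sums[OF this]
  have telescope: "(\<lambda>t. \<gamma> ^ Suc t * W (Suc t) - \<gamma> ^ t * W t) sums (- W 0)"
    by simp
  have "W 0 = V x"
    unfolding W_def by (rule sa_sum_sa_dist_0[OF pol])
  then show ?thesis
    unfolding term_eq using sums_add[OF rewards telescope] by simp
qed

lemma performance_difference:
  assumes "is_mdp P r \<gamma>" "stoch_policy \<pi>" "\<And>s. \<bar>V s\<bar> \<le> B"
  shows "sa_sum (visit P \<gamma> \<pi> x) (\<lambda>s a. r s a + \<gamma> * (\<Sum>s'\<in>UNIV. P s a s' * V s') - V s)
    = (1 - \<gamma>) * (Vf P r \<gamma> \<pi> x - V x)"
  unfolding visit_sa_sum[OF assms(1,2)] sums_unique[OF performance_difference_sums[OF assms], symmetric] ..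

lemma sa_dist_l1_le:
  assumes mdp: "is_mdp P r \<gamma>" and pol: "stoch_policy \<beta>" "stoch_policy \<beta>'"
    and tv: "\<forall>s. tv_dist (\<beta> s) (\<beta>' s) \<le> \<alpha>"
  shows "(\<Sum>s\<in>UNIV. \<Sum>a\<in>UNIV. \<bar>sa_dist P \<beta>' x t s a - sa_dist P \<beta> x t s a\<bar>) \<le> 2 * \<alpha> * (real t + 1)"
proof (induction t)
  case 0
  define \<nu> :: "'a \<Rightarrow> real" where "\<nu> s = (if s = x then 1 else 0)" for s
  have "(\<Sum>s\<in>UNIV. \<Sum>a\<in>UNIV. \<bar>\<nu> s * \<beta>' s a - \<nu> s * \<beta> s a\<bar>)
      \<le> (\<Sum>s\<in>UNIV. \<bar>\<nu> s - \<nu> s\<bar>) + 2 * \<alpha> * (\<Sum>s\<in>UNIV. \<nu> s)"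
    by (rule state_policy_l1_le[OF pol(2) _ tv]) (simp add: \<nu>_def)
  then show ?case
    by (simp add: \<nu>_def)
next
  case (Suc t)
  let ?\<nu> = "next_state_dist P (sa_dist P \<beta> x t)" and ?\<nu>' = "next_state_dist P (sa_dist P \<beta>' x t)"
  have "(\<Sum>s\<in>UNIV. \<Sum>a\<in>UNIV. \<bar>sa_dist P \<beta>' x (Suc t) s a - sa_dist P \<beta> x (Suc t) s a\<bar>)
      \<le> (\<Sum>s\<in>UNIV. \<bar>?\<nu>' s - ?\<nu> s\<bar>) + 2 * \<alpha> * (\<Sum>s\<in>UNIV. ?\<nu> s)"
    unfolding sa_dist_Suc
    by (rule state_policy_l1_le[OF pol(2) next_state_dist_nonneg[OF mdp sa_dist_nonneg[OF mdp pol(1)]] tv])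
  also have "(\<Sum>s\<in>UNIV. ?\<nu> s) = 1"
    unfolding next_state_dist_mass[OF mdp] by (rule sa_dist_mass[OF mdp pol(1)])
  also have "(\<Sum>s\<in>UNIV. \<bar>?\<nu>' s - ?\<nu> s\<bar>) \<le> 2 * \<alpha> * (real t + 1)"
    using next_state_dist_l1_le[OF mdp] Suc.IH by (rule order_trans)
  finally show ?case
    by (simp add: algebra_simps)
qed

lemma visit_sa_sum_diff_le:
  assumes mdp: "is_mdp P r \<gamma>" and pol: "stoch_policy \<beta>" "stoch_policy \<beta>'"
    and tv: "\<forall>s. tv_dist (\<beta> s) (\<beta>' s) \<le> \<alpha>" and g_bound: "\<And>s a. \<bar>g s a\<bar> \<le> G"
  shows "sa_sum (visit P \<gamma> \<beta>' x) g - sa_sum (visit P \<gamma> \<beta> x) g \<le> 2 * \<alpha> * G / (1 - \<gamma>)"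
proof -
  have \<gamma>: "0 \<le> \<gamma>" "\<gamma> < 1"
    using mdp by (auto simp: is_mdp_def)
  have "0 \<le> G"
    using g_bound by (meson abs_ge_zero order_trans)
  define A where "A \<pi> t = \<gamma> ^ t * sa_sum (sa_dist P \<pi> x t) g" for \<pi> t
  have A_summable: "summable (A \<pi>)" if "stoch_policy \<pi>" for \<pi>
    unfolding A_def by (rule summable_discounted_sa_sum[OF mdp that])
  have geom: "(\<lambda>t. 2 * \<alpha> * G * (real (Suc t) * \<gamma> ^ t)) sums (2 * \<alpha> * G * (1 / (1 - \<gamma>)\<^sup>2))"
    using \<gamma> by (intro sums_mult geometric_deriv_sums) auto
  have diff_le: "A \<beta>' t - A \<beta> t \<le> 2 * \<alpha> * G * (real (Suc t) * \<gamma> ^ t)" for t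
  proof -
    have "sa_sum (sa_dist P \<beta>' x t) g - sa_sum (sa_dist P \<beta> x t) g
        \<le> G * (\<Sum>s\<in>UNIV. \<Sum>a\<in>UNIV. \<bar>sa_dist P \<beta>' x t s a - sa_dist P \<beta> x t s a\<bar>)"
      by (rule sa_sum_diff_le_l1[OF g_bound])
    also have "\<dots> \<le> G * (2 * \<alpha> * (real t + 1))"
      by (rule mult_left_mono[OF sa_dist_l1_le[OF mdp pol tv] \<open>0 \<le> G\<close>])
    finally have "\<gamma> ^ t * (sa_sum (sa_dist P \<beta>' x t) g - sa_sum (sa_dist P \<beta> x t) g)
        \<le> \<gamma> ^ t * (G * (2 * \<alpha> * (real t + 1)))"
      using \<gamma> by (simp add: mult_left_mono)
    then show ?thesis
      by (simp add: A_def algebra_simps)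
  qed
  have "(\<Sum>t. A \<beta>' t - A \<beta> t) \<le> (\<Sum>t. 2 * \<alpha> * G * (real (Suc t) * \<gamma> ^ t))"
    by (rule suminf_le[OF diff_le summable_diff[OF A_summable[OF pol(2)] A_summable[OF pol(1)]]
        sums_summable[OF geom]])
  also have "\<dots> = 2 * \<alpha> * G * (1 / (1 - \<gamma>)\<^sup>2)"
    by (rule sums_unique[OF geom, symmetric])
  finally have sum_le: "(\<Sum>t. A \<beta>' t - A \<beta> t) \<le> 2 * \<alpha> * G * (1 / (1 - \<gamma>)\<^sup>2)" .
  have "sa_sum (visit P \<gamma> \<beta>' x) g - sa_sum (visit P \<gamma> \<beta> x) g = (1 - \<gamma>) * (\<Sum>t. A \<beta>' t - A \<beta> t)"
    unfolding visit_sa_sum[OF mdp pol(2)] visit_sa_sum[OF mdp pol(1)] A_def[symmetric]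
      right_diff_distrib[symmetric] suminf_diff[OF A_summable[OF pol(2)] A_summable[OF pol(1)]] ..
  also have "\<dots> \<le> (1 - \<gamma>) * (2 * \<alpha> * G * (1 / (1 - \<gamma>)\<^sup>2))"
    using \<gamma> sum_le by (intro mult_left_mono) auto
  also have "\<dots> = 2 * \<alpha> * G / (1 - \<gamma>)"
    using \<gamma> by (simp add: power2_eq_square)
  finally show ?thesis .
qed

lemma est_adv_le:
  assumes "\<And>s a. 0 \<le> d s a"
  shows "est_adv d q V \<le> sa_sum d (\<lambda>s a. Qt s a - V s) + werr d Qt q"
proof -
  have "est_adv d q V = sa_sum d (\<lambda>s a. (Qt s a - V s) + (q s a - Qt s a))"
    by (simp add: est_adv_def sa_sum_def)
  also have "\<dots> \<le> sa_sum d (\<lambda>s a. (Qt s a - V s) + \<bar>Qt s a - q s a\<bar>)"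
    by (rule sa_sum_mono[OF assms]) linarith
  also have "\<dots> = sa_sum d (\<lambda>s a. Qt s a - V s) + werr d Qt q"
    by (simp only: sa_sum_add) (simp add: werr_def sa_sum_def)
  finally show ?thesis .
qed

lemma werr_visit_le:
  assumes "is_mdp P r \<gamma>" "stoch_policy \<beta>" "stoch_policy \<beta>'"
    and "\<forall>s. tv_dist (\<beta> s) (\<beta>' s) \<le> \<alpha>" and "\<forall>s a. \<bar>Qt s a - q s a\<bar> \<le> G"
  shows "werr (visit P \<gamma> \<beta>' x) Qt q \<le> werr (visit P \<gamma> \<beta> x) Qt q + 2 * \<alpha> * G / (1 - \<gamma>)"
proof -
  have error_bound: "\<bar>\<bar>Qt s a - q s a\<bar>\<bar> \<le> G" for s a
    using assms(5) by simp
  from visit_sa_sum_diff_le[where g = "\<lambda>s a. \<bar>Qt s a - q s a\<bar>" and x = x, OF assms(1-4) error_bound]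
  show ?thesis
    by (simp add: werr_def sa_sum_def)
qed

theorem theorem2:
  fixes P :: "'s::finite \<Rightarrow> 'a::finite \<Rightarrow> 's \<Rightarrow> real"
    and r :: "'s \<Rightarrow> 'a \<Rightarrow> real" and \<gamma> :: real and s0 :: 's
    and \<pi>k \<beta>k \<beta>k1 \<pi>k1 :: "'s \<Rightarrow> 'a \<Rightarrow> real"
    and q :: "'s \<Rightarrow> 'a \<Rightarrow> real" and \<delta> \<epsilon> :: real
  assumes mdp: "is_mdp P r \<gamma>"
    and pol: "stoch_policy \<pi>k" "stoch_policy \<beta>k" "stoch_policy \<beta>k1"
    and pi_next: "\<pi>k1 = \<beta>k1"
    and tv: "\<forall>s. tv_dist (\<beta>k s) (\<beta>k1 s) \<le> \<delta> * (1 - \<gamma>)"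
    and err: "werr (visit P \<gamma> \<beta>k s0) (Qf P r \<gamma> \<pi>k) q \<le> \<epsilon>"
    and bnd: "\<forall>s a. \<bar>Qf P r \<gamma> \<pi>k s a - q s a\<bar> \<le> 1 / (1 - \<gamma>)"
  shows "Vf P r \<gamma> \<pi>k1 s0 - Vf P r \<gamma> \<pi>k s0 \<ge>
    1 / (1 - \<gamma>) * (est_adv (visit P \<gamma> \<pi>k1 s0) q (Vf P r \<gamma> \<pi>k) - \<epsilon> - 2 * \<delta> / (1 - \<gamma>))"
proof -
  have \<gamma>: "0 \<le> \<gamma>" "\<gamma> < 1"
    using mdp by (auto simp: is_mdp_def)
  define V Q where "V = Vf P r \<gamma> \<pi>k" and "Q = Qf P r \<gamma> \<pi>k"
  define d' where "d' = visit P \<gamma> \<pi>k1 s0"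
  have "est_adv d' q V \<le> sa_sum d' (\<lambda>s a. Q s a - V s) + werr d' Q q"
    unfolding d'_def pi_next by (rule est_adv_le[OF visit_nonneg[OF mdp pol(3)]])
  moreover have "sa_sum d' (\<lambda>s a. Q s a - V s) = (1 - \<gamma>) * (Vf P r \<gamma> \<pi>k1 s0 - V s0)"
    unfolding d'_def Q_def V_def Qf_def pi_next
    by (rule performance_difference[OF mdp pol(3) Vf_abs_le[OF mdp pol(1)]])
  moreover have "werr d' Q q \<le> werr (visit P \<gamma> \<beta>k s0) Q q + 2 * (\<delta> * (1 - \<gamma>)) * (1 / (1 - \<gamma>)) / (1 - \<gamma>)"
    unfolding d'_def Q_def pi_next by (rule werr_visit_le[OF mdp pol(2,3) tv bnd])
  moreover have "2 * (\<delta> * (1 - \<gamma>)) * (1 / (1 - \<gamma>)) / (1 - \<gamma>) = 2 * \<delta> / (1 - \<gamma>)"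
    using \<gamma> by simp
  ultimately have "est_adv d' q V - \<epsilon> - 2 * \<delta> / (1 - \<gamma>) \<le> (1 - \<gamma>) * (Vf P r \<gamma> \<pi>k1 s0 - V s0)"
    using err unfolding Q_def by linarith
  then have "1 / (1 - \<gamma>) * (est_adv d' q V - \<epsilon> - 2 * \<delta> / (1 - \<gamma>))
      \<le> 1 / (1 - \<gamma>) * ((1 - \<gamma>) * (Vf P r \<gamma> \<pi>k1 s0 - V s0))"
    using \<gamma> by (intro mult_left_mono) auto
  then show ?thesis
    using \<gamma> by (simp add: d'_def V_def)
qed

end
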